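(* Let $d\ge 2$ be an integer, $F\in(0,1]$ and $k\in(0,1)$. For each integer $n\ge 1$ let $C_n$ be $\sum_s\frac{4\lambda^+_s\lambda^-_s}{\lambda^+_s+\lambda^-_s}$ computed from the eigenvalues of the $nd$-qubit depolarized GHZ state with fidelity $k^{n-1}F$ (terms with $\lambda^+_s+\lambda^-_s=0$ taken to be $0$). Then $$\lim_{n\to\infty} d\,(1-C_n)\,n^2=0.$$
   Context: The $N$-qubit depolarized GHZ state with fidelity $G\in[0,1]$ is $G|\mathrm{GHZ}_N\rangle\langle\mathrm{GHZ}_N|+\frac{1-G}{2^N-1}(I-|\mathrm{GHZ}_N\rangle\langle\mathrm{GHZ}_N|)$ with $|\mathrm{GHZ}_N\rangle=(|0\cdots0\rangle+|1\cdots1\rangle)/\sqrt2$. It is diagonal in the GHZ basis $|G^\pm_s\rangle=(|s\rangle\pm|\bar s\rangle)/\sqrt2$, where $s$ ranges over one representative of each pair $\{s,\bar s\}$ of complementary bit strings of length $N$, with eigenvalues $\lambda^\pm_s$. The quantity $d(1-C_n)n^2$ is the quantum Fisher information for estimating the normalized average $\frac{1}{\sqrt d}\sum_i x_i$ of phases encoded by $\exp[-i\sum_i x_iH_i]$, $H_i=\frac12\sum_{k}\sigma_z^{(i,k)}$ on the $n$ qubits of node $i$. *)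

theory Defs
  imports Complex_Main
begin

(* Computational basis of N qubits: bit strings encoded as naturals i < 2^N.
   The complementary bit string of i is 2^N - 1 - i. *)

definition comp_bits :: "nat \<Rightarrow> nat \<Rightarrow> nat" where
  "comp_bits N i = 2^N - 1 - i"

definition ghz_vec :: "nat \<Rightarrow> nat \<Rightarrow> real" where
  "ghz_vec N i = (if i = 0 \<or> i = 2^N - 1 then 1 / sqrt 2 else 0)"

definition dep_ghz :: "nat \<Rightarrow> real \<Rightarrow> nat \<Rightarrow> nat \<Rightarrow> real" where
  "dep_ghz N G i j =
     G * ghz_vec N i * ghz_vec N j
     + (1 - G) / (2^N - 1) * ((if i = j then 1 else 0) - ghz_vec N i * ghz_vec N j)"

(* GHZ basis vector |G^{+-}_s> = (|s> +- |s-bar>)/sqrt 2, sg = 1 or -1 *)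
definition ghz_basis :: "nat \<Rightarrow> nat \<Rightarrow> real \<Rightarrow> nat \<Rightarrow> real" where
  "ghz_basis N s sg i =
     (if i = s then 1 / sqrt 2 else 0) + sg * (if i = comp_bits N s then 1 / sqrt 2 else 0)"

(* eigenvalue lambda^{+-}_s = <G^{+-}_s| rho |G^{+-}_s> (rho is diagonal in the GHZ basis) *)
definition ghz_eig :: "nat \<Rightarrow> real \<Rightarrow> nat \<Rightarrow> real \<Rightarrow> real" where
  "ghz_eig N G s sg =
     (\<Sum>i<2^N. \<Sum>j<2^N. ghz_basis N s sg i * dep_ghz N G i j * ghz_basis N s sg j)"

(* C = sum over representatives s (those with leading bit 0, i.e. s < 2^(N-1))
   of 4 l+ l- / (l+ + l-), terms with l+ + l- = 0 taken to be 0 *)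
definition C_ghz :: "nat \<Rightarrow> real \<Rightarrow> real" where
  "C_ghz N G =
     (\<Sum>s<2^(N-1).
        (let a = ghz_eig N G s 1; b = ghz_eig N G s (-1)
         in if a + b = 0 then 0 else 4 * a * b / (a + b)))"

end

theory Submission imports Defs begin

text \<open>In the GHZ basis the depolarized state has eigenvalue \<open>G\<close> on \<open>|GHZ\<^sub>N\<rangle>\<close> and the
  common value \<open>p = (1 - G)/(2^N - 1)\<close> on every other basis vector. Hence all terms of
  \<open>C\<close> but the one for \<open>s = 0\<close> equal \<open>2p\<close>, and a short computation gives
  \<open>1 - C = (G - p)\<^sup>2/(G + p) \<le> G + p\<close>. For \<open>N = nd\<close> and \<open>G = k\<^bsup>n-1\<^esup>F\<close> both \<open>G\<close> and
  \<open>p \<le> 2/2\<^bsup>nd\<^esup>\<close> decay geometrically in \<open>n\<close>, which beats the factor \<open>n\<^sup>2\<close>.\<close>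

lemma sum_lessThan_two_points:
  fixes f :: "nat \<Rightarrow> real"
  assumes "a < M" "c < M" "a \<noteq> c" "\<And>i. i \<noteq> a \<Longrightarrow> i \<noteq> c \<Longrightarrow> f i = 0"
  shows "(\<Sum>i<M. f i) = f a + f c"
proof -
  have "(\<Sum>i<M. f i) = (\<Sum>i\<in>{a, c}. f i)"
    by (rule sum.mono_neutral_right) (use assms in auto)
  then show ?thesis using assms by simp
qed

definition ghz_noise :: "nat \<Rightarrow> real \<Rightarrow> real" where
  "ghz_noise N G = (1 - G) / (2^N - 1)"

lemma two_power_pred: "N \<ge> 1 \<Longrightarrow> (2::'a::{monoid_mult,numeral}) ^ N = 2 * 2 ^ (N - 1)"
  by (metis Suc_diff_le diff_Suc_1 power_Suc)

lemma comp_bits_representative: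
  assumes "N \<ge> 1" "s < 2^(N-1)"
  shows "s < 2^N" "comp_bits N s < 2^N" "comp_bits N s \<noteq> s"
  using assms two_power_pred[OF assms(1), where 'a=nat] by (auto simp: comp_bits_def)

lemma ghz_vec_representative:
  assumes "N \<ge> 1" "s < 2^(N-1)"
  shows "ghz_vec N s = (if s = 0 then 1 / sqrt 2 else 0)"
    and "ghz_vec N (comp_bits N s) = (if s = 0 then 1 / sqrt 2 else 0)"
  using assms two_power_pred[OF assms(1), where 'a=nat]
  by (auto simp: ghz_vec_def comp_bits_def)

lemma ghz_eig_two_by_two:
  assumes "N \<ge> 1" "s < 2^(N-1)"
  defines "c \<equiv> comp_bits N s"
  shows "ghz_eig N G s sg = (dep_ghz N G s s + sg * dep_ghz N G s c
          + sg * dep_ghz N G c s + sg\<^sup>2 * dep_ghz N G c c) / 2"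
proof -
  note cf = comp_bits_representative[OF assms(1,2), folded c_def]
  let ?b = "ghz_basis N s sg"
  have b_s: "?b s = 1 / sqrt 2" and b_c: "?b c = sg / sqrt 2"
    using cf by (auto simp: ghz_basis_def c_def)
  have b_0: "?b i = 0" if "i \<noteq> s" "i \<noteq> c" for i
    using that by (simp add: ghz_basis_def c_def)
  have inner: "(\<Sum>j<2^N. ?b i * dep_ghz N G i j * ?b j)
      = ?b i * dep_ghz N G i s * ?b s + ?b i * dep_ghz N G i c * ?b c" for i
    by (rule sum_lessThan_two_points) (use cf b_0 in auto)
  have "ghz_eig N G s sg
      = (\<Sum>i<2^N. ?b i * dep_ghz N G i s * ?b s + ?b i * dep_ghz N G i c * ?b c)"
    unfolding ghz_eig_def inner ..
  also have "\<dots> = (?b s * dep_ghz N G s s * ?b s + ?b s * dep_ghz N G s c * ?b c)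
      + (?b c * dep_ghz N G c s * ?b s + ?b c * dep_ghz N G c c * ?b c)"
    by (rule sum_lessThan_two_points) (use cf b_0 in auto)
  also have "\<dots> = (dep_ghz N G s s + sg * dep_ghz N G s c
      + sg * dep_ghz N G c s + sg\<^sup>2 * dep_ghz N G c c) / 2"
    unfolding b_s b_c by (simp add: field_simps power2_eq_square)
  finally show ?thesis .
qed

lemma dep_ghz_block:
  fixes G :: real
  assumes "N \<ge> 1" "s < 2^(N-1)"
  defines "c \<equiv> comp_bits N s" and "p \<equiv> ghz_noise N G"
  shows "dep_ghz N G s s = (if s = 0 then (G + p) / 2 else p)"
    and "dep_ghz N G c c = (if s = 0 then (G + p) / 2 else p)"
    and "dep_ghz N G s c = (if s = 0 then (G - p) / 2 else 0)"
    and "dep_ghz N G c s = (if s = 0 then (G - p) / 2 else 0)"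
proof -
  have "(2::real) ^ N > 1" using assms(1) by (simp add: one_less_power)
  then show "dep_ghz N G s s = (if s = 0 then (G + p) / 2 else p)"
    and "dep_ghz N G c c = (if s = 0 then (G + p) / 2 else p)"
    and "dep_ghz N G s c = (if s = 0 then (G - p) / 2 else 0)"
    and "dep_ghz N G c s = (if s = 0 then (G - p) / 2 else 0)"
    using comp_bits_representative[OF assms(1,2)]
    unfolding dep_ghz_def ghz_vec_representative[OF assms(1,2)] c_def p_def ghz_noise_def
    by (auto simp: field_simps)
qed

lemma ghz_eig_eq:
  assumes "N \<ge> 1" "s < 2^(N-1)" "sg = 1 \<or> sg = -1"
  shows "ghz_eig N G s sg = (if s = 0 \<and> sg = 1 then G else ghz_noise N G)"
  using assms(3)
  unfolding ghz_eig_two_by_two[OF assms(1,2)] dep_ghz_block[OF assms(1,2)]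
  by (auto simp: field_simps)

lemma C_ghz_eq:
  fixes G :: real
  assumes "N \<ge> 1"
  defines "p \<equiv> ghz_noise N G"
  shows "C_ghz N G = 4 * G * p / (G + p) + (2^(N-1) - 1) * (2 * p)"
proof -
  define t where "t s = (let a = ghz_eig N G s 1; b = ghz_eig N G s (-1)
         in if a + b = 0 then 0 else 4 * a * b / (a + b))" for s
  have t_0: "t 0 = 4 * G * p / (G + p)"
    using ghz_eig_eq[OF assms(1), of 0] by (auto simp: t_def p_def Let_def)
  have t_s: "t s = 2 * p" if "s \<in> {1..<2^(N-1)}" for s
    using that ghz_eig_eq[OF assms(1), of s] by (auto simp: t_def p_def Let_def)
  have "C_ghz N G = (\<Sum>s<2^(N-1). t s)"
    unfolding C_ghz_def t_def ..
  also have "\<dots> = t 0 + (\<Sum>s\<in>{1..<2^(N-1)}. t s)"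
    by (simp add: sum.atLeast_Suc_lessThan atLeast0LessThan[symmetric])
  also have "(\<Sum>s\<in>{1..<2^(N-1)}. t s) = (\<Sum>s\<in>{1..<(2::nat)^(N-1)}. 2 * p)"
    using t_s by (rule sum.cong[OF refl])
  finally show ?thesis using t_0 by (simp add: of_nat_diff)
qed

lemma one_minus_C_ghz_eq:
  fixes G :: real
  assumes "N \<ge> 1"
  defines "p \<equiv> ghz_noise N G"
  shows "1 - C_ghz N G = (G - p)\<^sup>2 / (G + p)"
proof -
  have "(2::real) ^ N > 1" using assms(1) by (simp add: one_less_power)
  then have "(2^N - 1) * p = 1 - G"
    by (simp add: p_def ghz_noise_def)
  then have "(2^(N-1) - 1) * (2 * p) = 1 - G - p"
    using two_power_pred[OF assms(1), where 'a=real] by (simp add: algebra_simps)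
  then have "1 - C_ghz N G = (G + p) - 4 * G * p / (G + p)"
    using C_ghz_eq[OF assms(1), of G] by (simp add: p_def)
  also have "\<dots> = (G - p)\<^sup>2 / (G + p)"
    by (cases "G + p = 0") (auto simp: field_simps power2_eq_square)
  finally show ?thesis .
qed

lemma ghz_noise_bounds:
  assumes "N \<ge> 1" "0 \<le> G" "G \<le> 1"
  shows "0 \<le> ghz_noise N G" "ghz_noise N G \<le> 2 / 2^N"
proof -
  have M: "(2::real) \<le> 2^N"
    using assms(1) by (metis power_increasing power_one_right one_le_numeral)
  then show "0 \<le> ghz_noise N G"
    using assms by (simp add: ghz_noise_def)
  have "ghz_noise N G \<le> 1 / (2^N - 1)"
    using M assms unfolding ghz_noise_def by (intro divide_right_mono) auto
  also have "\<dots> \<le> 2 / 2^N"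
    using M by (simp add: divide_simps)
  finally show "ghz_noise N G \<le> 2 / 2^N" .
qed

lemma one_minus_C_ghz_bounds:
  assumes "N \<ge> 1" "0 \<le> G" "G \<le> 1"
  shows "0 \<le> 1 - C_ghz N G" "1 - C_ghz N G \<le> G + 2 / 2^N"
proof -
  define p where "p = ghz_noise N G"
  have p: "0 \<le> p" "p \<le> 2 / 2^N"
    using ghz_noise_bounds[OF assms] by (simp_all add: p_def)
  have eq: "1 - C_ghz N G = (G - p)\<^sup>2 / (G + p)"
    using one_minus_C_ghz_eq[OF assms(1)] by (simp add: p_def)
  show "0 \<le> 1 - C_ghz N G"
    unfolding eq using assms p by simp
  have "(G - p)\<^sup>2 \<le> (G + p) * (G + p)"
    using assms p by (simp add: power2_eq_square algebra_simps)
  then have "(G - p)\<^sup>2 / (G + p) \<le> G + p"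
    by (cases "G + p = 0") (auto simp: divide_le_eq less_le assms p)
  then show "1 - C_ghz N G \<le> G + 2 / 2^N"
    unfolding eq using p by linarith
qed

lemma one_minus_C_ghz_geometric_bound:
  fixes F k :: real
  assumes "d \<ge> 1" "n \<ge> 1" "0 < F" "F \<le> 1" "0 < k" "k \<le> 1"
  shows "0 \<le> 1 - C_ghz (n * d) (k ^ (n - 1) * F)"
    and "1 - C_ghz (n * d) (k ^ (n - 1) * F) \<le> k ^ n / k + 2 * (1/2) ^ n"
proof -
  let ?G = "k ^ (n - 1) * F"
  have N: "n * d \<ge> 1" using assms(1,2) by simp
  have "k ^ (n - 1) \<le> 1" using assms by (simp add: power_le_one)
  then have G: "0 \<le> ?G" "?G \<le> 1"
    using assms by (auto intro: mult_le_one)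
  note bounds = one_minus_C_ghz_bounds[OF N G]
  show "0 \<le> 1 - C_ghz (n * d) ?G" by (fact bounds(1))
  have "?G \<le> k ^ n / k"
    using assms by (cases n) auto
  moreover have "(2::real) ^ n \<le> 2 ^ (n * d)"
    using assms(1) by (intro power_increasing) auto
  then have "2 / 2 ^ (n * d) \<le> 2 * (1/2::real) ^ n"
    by (simp add: divide_simps power_one_over)
  ultimately show "1 - C_ghz (n * d) ?G \<le> k ^ n / k + 2 * (1/2) ^ n"
    using bounds(2) by linarith
qed

lemma real_sq_times_power_tendsto_zero:
  fixes x :: real
  assumes "0 < x" "x < 1"
  shows "(\<lambda>n. (real n)\<^sup>2 * x ^ n) \<longlonglongrightarrow> 0"
proof -
  have "(\<lambda>n. real n * sqrt x ^ n) \<longlonglongrightarrow> 0"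
    using assms by (intro powser_times_n_limit_0) (simp add: real_sqrt_lt_1_iff)
  then have "(\<lambda>n. (real n * sqrt x ^ n)\<^sup>2) \<longlonglongrightarrow> 0"
    using tendsto_power[of _ 0 sequentially 2] by fastforce
  moreover have "(real n * sqrt x ^ n)\<^sup>2 = (real n)\<^sup>2 * x ^ n" for n
  proof -
    have "(sqrt x ^ n)\<^sup>2 = (sqrt x)\<^sup>2 ^ n" by (metis power_mult mult.commute)
    then show ?thesis using assms by (simp add: power_mult_distrib)
  qed
  ultimately show ?thesis by simp
qed

theorem mainTheorem5:
  fixes d :: nat and F k :: real
  assumes "d \<ge> 2" and "0 < F" and "F \<le> 1" and "0 < k" and "k < 1"
  shows "(\<lambda>n::nat. real d * (1 - C_ghz (n * d) (k ^ (n - 1) * F)) * (real n)^2)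
           \<longlonglongrightarrow> 0"
proof (rule tendsto_sandwich[where f = "\<lambda>_. 0"])
  define g where "g n = real d * (k ^ n / k + 2 * (1/2) ^ n) * (real n)\<^sup>2" for n :: nat
  have "(\<lambda>n. real d * ((real n)\<^sup>2 * k ^ n / k + 2 * ((real n)\<^sup>2 * (1/2) ^ n))) \<longlonglongrightarrow> real d * (0 / k + 2 * 0)"
    using real_sq_times_power_tendsto_zero[OF assms(4,5)] real_sq_times_power_tendsto_zero[of "1/2"] assms(4)
    by (intro tendsto_intros) auto
  moreover have "g = (\<lambda>n. real d * ((real n)\<^sup>2 * k ^ n / k + 2 * ((real n)\<^sup>2 * (1/2) ^ n)))"
    by (intro ext) (simp add: g_def algebra_simps)
  ultimately show "g \<longlonglongrightarrow> 0" by simp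
  note bound = one_minus_C_ghz_geometric_bound[of d _ F k]
  show "\<forall>\<^sub>F n in sequentially. 0 \<le> real d * (1 - C_ghz (n * d) (k ^ (n - 1) * F)) * (real n)\<^sup>2"
    using eventually_ge_at_top[of 1] by eventually_elim (use assms bound(1) in auto)
  show "\<forall>\<^sub>F n in sequentially. real d * (1 - C_ghz (n * d) (k ^ (n - 1) * F)) * (real n)\<^sup>2 \<le> g n"
    using eventually_ge_at_top[of 1] unfolding g_def
    by eventually_elim (use assms bound(2) in \<open>auto intro!: mult_right_mono mult_left_mono\<close>)
qed simp

end
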